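(* Let $n\geq 1$ be an integer and let $a,b,x\in\mathbb{C}$. Then $$\sum_{k=0}^{n-1}\frac{1}{n}\binom{n}{k}\binom{n}{k+1}x^{2k}b^{n-1-k}=\sum_{k=0}^{n-1}\binom{n-1}{k}M_k^{(a,b)}x^k(x^2-ax+b)^{n-1-k},$$ where $M_k^{(a,b)}$ denotes the $(a,b)$-Motzkin number defined in the context.
   Context: Let $C_k=\frac{1}{k+1}\binom{2k}{k}$ be the Catalan numbers. For an integer $m\geq 0$ and $a,b\in\mathbb{C}$, the $(a,b)$-Motzkin number is $$M_m^{(a,b)}=\sum_{k=0}^{\lfloor m/2\rfloor}\binom{m}{2k}C_k a^{m-2k}b^k .$$ (Equivalently, it is the total weight of Motzkin paths from $(0,0)$ to $(m,m)$ with steps $(0,2),(2,0),(1,1)$ never going below $y=x$, where each $(1,1)$ step has weight $a$, each $(2,0)$ step has weight $b$, and a path's weight is the product of its step weights.) In particular $M_0^{(a,b)}=1$. *)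

theory Defs
  imports Complex_Main
begin

definition catalan :: "nat \<Rightarrow> complex" where
  "catalan k = of_nat ((2*k) choose k) / of_nat (k+1)"

definition motzkin :: "complex \<Rightarrow> complex \<Rightarrow> nat \<Rightarrow> complex" where
  "motzkin a b m = (\<Sum>k=0..m div 2. of_nat (m choose (2*k)) * catalan k * a^(m - 2*k) * b^k)"

end

theory Submission imports Defs begin

text \<open>Scaling: \<open>M\<^sub>k(a,b) x^k = M\<^sub>k(a x, b x^2)\<close>.
  Binomial transform: \<open>\<Sum>\<^sub>k C(N,k) M\<^sub>k(a,b) c^(N-k) = M\<^sub>N(a+c, b)\<close>; with
  \<open>c = x^2 - a x + b\<close> and \<open>N = n - 1\<close> this turns the right-hand side into \<open>M\<^sub>N(x^2+b, x^2 b)\<close>.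
  Narayana expansion: \<open>M\<^sub>N(s+t, s t) = \<Sum>\<^sub>k narayana (N+1) k s^k t^(N-k)\<close>, obtained by expanding
  \<open>(s+t)^(N-2j)\<close> in the definition of \<open>M\<^sub>N\<close> and collecting the coefficient of \<open>s^k\<close>,
  which sums to a Narayana number by Vandermonde's identity.\<close>

text \<open>\<open>narayana n k\<close> is the Narayana number \<open>N(n, k+1)\<close>: Dyck paths of semilength \<open>n\<close>
  with \<open>k+1\<close> peaks.\<close>

definition narayana :: "nat \<Rightarrow> nat \<Rightarrow> complex" where
  "narayana n k = of_nat (n choose k) * of_nat (n choose (k+1)) / of_nat n"

lemma sum_atLeast0AtMost_shift_restrict:
  fixes g :: "nat \<Rightarrow> 'a::comm_monoid_add"
  assumes "m + d \<le> N"
  shows "(\<Sum>k=0..N. if d \<le> k \<and> k - d \<le> m then g (k - d) else 0) = (\<Sum>i=0..m. g i)"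
proof -
  have "(\<Sum>k=0..N. if d \<le> k \<and> k - d \<le> m then g (k - d) else 0)
      = (\<Sum>k=0..N. if k \<in> {0+d..m+d} then g (k - d) else 0)"
    by (rule sum.cong) auto
  also have "\<dots> = (\<Sum>k\<in>{0..N} \<inter> {0+d..m+d}. g (k - d))"
    by (rule sum.inter_restrict[symmetric]) simp
  also have "{0..N} \<inter> {0+d..m+d} = {0+d..m+d}"
    using assms by auto
  also have "(\<Sum>k\<in>{0+d..m+d}. g (k - d)) = (\<Sum>i=0..m. g i)"
    by (subst sum.shift_bounds_cl_nat_ivl) simp
  finally show ?thesis .
qed

lemma sum_half_triangle_regroup:
  fixes g :: "nat \<Rightarrow> nat \<Rightarrow> 'a::comm_monoid_add"
  shows "(\<Sum>j=0..N div 2. \<Sum>i=0..N-2*j. g j i)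
       = (\<Sum>k=0..N. \<Sum>j=0..N div 2. if j \<le> k \<and> k - j \<le> N - 2*j then g j (k-j) else 0)"
proof -
  have "(\<Sum>k=0..N. if j \<le> k \<and> k - j \<le> N - 2*j then g j (k-j) else 0) = (\<Sum>i=0..N-2*j. g j i)"
    if "j \<in> {0..N div 2}" for j
    using that by (intro sum_atLeast0AtMost_shift_restrict) auto
  then show ?thesis
    by (subst sum.swap) simp
qed

lemma sum_half_triangle_swap:
  fixes g :: "nat \<Rightarrow> nat \<Rightarrow> 'a::comm_monoid_add"
  shows "(\<Sum>k=0..N. \<Sum>j=0..k div 2. g k j) = (\<Sum>j=0..N div 2. \<Sum>i=0..N-2*j. g (i+2*j) j)"
proof -
  have "(\<Sum>j=0..k div 2. g k j) = (\<Sum>j=0..N div 2. if 2*j \<le> k \<and> k - 2*j \<le> N - 2*j then g k j else 0)"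
    if "k \<in> {0..N}" for k
  proof -
    have "{0..N div 2} \<inter> {j. 2*j \<le> k \<and> k - 2*j \<le> N - 2*j} = {0..k div 2}"
      using that by auto
    then show ?thesis
      using sum.inter_restrict[of "{0..N div 2}" "g k" "{j. 2*j \<le> k \<and> k - 2*j \<le> N - 2*j}"]
      by simp
  qed
  then have "(\<Sum>k=0..N. \<Sum>j=0..k div 2. g k j)
      = (\<Sum>j=0..N div 2. \<Sum>k=0..N. if 2*j \<le> k \<and> k - 2*j \<le> N - 2*j then g (k - 2*j + 2*j) j else 0)"
    by (subst sum.swap) (auto intro!: sum.cong)
  also have "\<dots> = (\<Sum>j=0..N div 2. \<Sum>i=0..N-2*j. g (i+2*j) j)"
    by (intro sum.cong refl sum_atLeast0AtMost_shift_restrict) auto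
  finally show ?thesis .
qed

lemma motzkin_scale: "motzkin a b k * x^k = motzkin (a*x) (b*x^2) k"
  unfolding motzkin_def sum_distrib_right
proof (rule sum.cong[OF refl])
  fix j assume "j \<in> {0..k div 2}"
  then have "k = (k - 2*j) + 2*j"
    by auto
  then have "x^k = x^(k-2*j) * (x^2)^j"
    by (metis power_add power_mult)
  then show "of_nat (k choose (2*j)) * catalan j * a^(k-2*j) * b^j * x^k
      = of_nat (k choose (2*j)) * catalan j * (a*x)^(k-2*j) * (b*x^2)^j"
    by (simp add: power_mult_distrib)
qed

lemma motzkin_binomial_transform:
  "(\<Sum>k=0..N. of_nat (N choose k) * motzkin a b k * c^(N-k)) = motzkin (a+c) b N"
proof -
  have "(\<Sum>k=0..N. of_nat (N choose k) * motzkin a b k * c^(N-k))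
      = (\<Sum>k=0..N. \<Sum>j=0..k div 2. of_nat (N choose k) * of_nat (k choose (2*j)) * catalan j
                                     * a^(k-2*j) * b^j * c^(N-k))"
    unfolding motzkin_def by (simp add: sum_distrib_left sum_distrib_right mult.assoc)
  also have "\<dots> = (\<Sum>j=0..N div 2. \<Sum>i=0..N-2*j. of_nat (N choose (i+2*j)) * of_nat ((i+2*j) choose (2*j))
                                     * catalan j * a^i * b^j * c^(N-2*j-i))"
    by (subst sum_half_triangle_swap) (simp add: diff_diff_left add.commute)
  also have "\<dots> = (\<Sum>j=0..N div 2. of_nat (N choose (2*j)) * catalan j
                     * (\<Sum>i=0..N-2*j. of_nat ((N-2*j) choose i) * a^i * c^(N-2*j-i)) * b^j)"
    unfolding sum_distrib_left sum_distrib_right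
  proof (intro sum.cong refl)
    fix j i assume "j \<in> {0..N div 2}" "i \<in> {0..N-2*j}"
    then have "(N choose (i+2*j)) * ((i+2*j) choose (2*j)) = (N choose (2*j)) * ((N-2*j) choose i)"
      using choose_mult[of "2*j" "i+2*j" N] by auto
    then have "(of_nat (N choose (i+2*j)) :: complex) * of_nat ((i+2*j) choose (2*j))
             = of_nat (N choose (2*j)) * of_nat ((N-2*j) choose i)"
      by (metis of_nat_mult)
    then show "of_nat (N choose (i+2*j)) * of_nat ((i+2*j) choose (2*j)) * catalan j * a^i * b^j * c^(N-2*j-i)
        = of_nat (N choose (2*j)) * catalan j * (of_nat ((N-2*j) choose i) * a^i * c^(N-2*j-i)) * b^j"
      by (simp add: algebra_simps)
  qed
  also have "\<dots> = motzkin (a+c) b N"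
    unfolding motzkin_def binomial_ring atLeast0AtMost by (simp add: algebra_simps)
  finally show ?thesis .
qed

lemma choose_mult_reorder:
  assumes "j \<le> k" "k + j \<le> N"
  shows "(N choose (2*j)) * ((N-2*j) choose (k-j)) * ((2*j) choose j)
       = (N choose k) * ((N-k) choose j) * (k choose j)"
proof -
  have "(N choose (2*j)) * ((N-2*j) choose (k-j)) * ((2*j) choose j)
      = (N choose (k+j)) * ((k+j) choose (2*j)) * ((2*j) choose j)"
    using choose_mult[of "2*j" "k+j" N] assms by (simp add: mult_2)
  also have "\<dots> = (N choose (k+j)) * ((k+j) choose k) * (k choose j)"
    using choose_mult[of j "2*j" "k+j"] binomial_symmetric[of j "k+j"] assms
    by (simp add: mult.assoc mult_2)
  also have "\<dots> = (N choose k) * ((N-k) choose j) * (k choose j)"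
    using choose_mult[of k "k+j" N] assms by simp
  finally show ?thesis .
qed

lemma choose_catalan_choose_eq:
  assumes "j \<le> k" "k + j \<le> N"
  shows "of_nat (N choose (2*j)) * catalan j * of_nat ((N-2*j) choose (k-j))
     = of_nat (N choose k) / of_nat (N-k+1) * of_nat ((k choose j) * ((N-k+1) choose (j+1)))"
proof -
  have reorder: "(of_nat (N choose (2*j)) :: complex) * of_nat ((N-2*j) choose (k-j)) * of_nat ((2*j) choose j)
       = of_nat (N choose k) * of_nat ((N-k) choose j) * of_nat (k choose j)"
    using choose_mult_reorder[OF assms] by (metis of_nat_mult)
  have "(of_nat (Suc (N-k)) :: complex) * of_nat ((N-k) choose j)
      = of_nat (Suc (N-k) choose Suc j) * of_nat (Suc j)"
    using Suc_times_binomial_eq[of "N-k" j] by (metis of_nat_mult)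
  then have absorb: "(of_nat ((N-k) choose j) :: complex) / of_nat (Suc j)
                   = of_nat (Suc (N-k) choose Suc j) / of_nat (Suc (N-k))"
    by (simp add: field_simps del: binomial_Suc_Suc of_nat_Suc)
  have "of_nat (N choose (2*j)) * catalan j * of_nat ((N-2*j) choose (k-j))
     = of_nat (N choose k) * of_nat (k choose j) * (of_nat ((N-k) choose j) / of_nat (Suc j))"
    using reorder unfolding catalan_def by (simp add: field_simps del: of_nat_Suc)
  then show ?thesis
    unfolding absorb by (simp add: field_simps del: binomial_Suc_Suc of_nat_Suc)
qed

lemma sum_choose_mult_choose_Suc:
  assumes "k \<le> N"
  shows "(\<Sum>j=0..N div 2. (k choose j) * ((N-k+1) choose (j+1))) = Suc N choose (k+1)"
proof -
  let ?f = "\<lambda>j. (k choose j) * ((N-k+1) choose (j+1))"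
  have zero: "?f j = 0" if "\<not> (j \<le> k \<and> j \<le> N - k)" for j
    using that by auto
  have "(\<Sum>j=0..N div 2. ?f j) = (\<Sum>j=0..N. ?f j)"
    by (rule sum.mono_neutral_left) (auto intro!: zero)
  also have "\<dots> = (\<Sum>j\<le>N-k. ?f j)"
    by (rule sum.mono_neutral_right) (auto intro!: zero)
  also have "\<dots> = (\<Sum>j\<le>N-k. (k choose j) * ((N-k+1) choose ((N-k) - j)))"
  proof (intro sum.cong refl)
    fix j assume "j \<in> {..N-k}"
    then have "(N-k+1) choose (j+1) = (N-k+1) choose (N-k+1-(j+1))"
      by (intro binomial_symmetric) simp
    then show "?f j = (k choose j) * ((N-k+1) choose ((N-k) - j))"
      by simp
  qed
  also have "\<dots> = Suc N choose (N-k)"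
    using vandermonde[of k "N-k+1" "N-k"] assms by simp
  also have "\<dots> = Suc N choose (k+1)"
    using binomial_symmetric[of "N-k" "Suc N"] assms by (simp add: Suc_diff_le)
  finally show ?thesis .
qed

lemma choose_divide_Suc_diff:
  assumes "k \<le> N"
  shows "(of_nat (N choose k) :: complex) / of_nat (N-k+1) = of_nat (Suc N choose k) / of_nat (Suc N)"
proof -
  have "(N-k+1) * (Suc N choose k) = Suc N * (N choose k)"
    using binomial_absorb_comp[of "Suc N" k] assms by (simp add: Suc_diff_le)
  then have "(of_nat (N-k+1) :: complex) * of_nat (Suc N choose k) = of_nat (Suc N) * of_nat (N choose k)"
    by (metis of_nat_mult)
  then show ?thesis
    by (simp add: divide_simps del: of_nat_Suc) (simp add: mult.commute)
qed

lemma narayana_as_catalan_sum: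
  assumes "k \<le> N"
  shows "(\<Sum>j=0..N div 2. if j \<le> k \<and> k - j \<le> N - 2*j
            then of_nat (N choose (2*j)) * catalan j * of_nat ((N-2*j) choose (k-j)) else 0)
       = narayana (Suc N) k"
proof -
  have termwise: "(if j \<le> k \<and> k - j \<le> N - 2*j
           then of_nat (N choose (2*j)) * catalan j * of_nat ((N-2*j) choose (k-j)) else 0)
      = of_nat (N choose k) / of_nat (N-k+1) * (of_nat ((k choose j) * ((N-k+1) choose (j+1))) :: complex)"
    if j: "j \<in> {0..N div 2}" for j
  proof (cases "j \<le> k \<and> k - j \<le> N - 2*j")
    case True
    moreover from True j have "k + j \<le> N"
      by auto
    ultimately show ?thesis
      using choose_catalan_choose_eq[of j k N] by simp
  next
    case False
    from j have "2*j \<le> N"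
      by auto
    with False assms have "k < j \<or> N - k < j"
      by presburger
    then have "(k choose j) * ((N-k+1) choose (j+1)) = 0"
      by auto
    then show ?thesis
      by (simp only: if_not_P[OF False] of_nat_0 mult_zero_right)
  qed
  have "(\<Sum>j=0..N div 2. if j \<le> k \<and> k - j \<le> N - 2*j
            then of_nat (N choose (2*j)) * catalan j * of_nat ((N-2*j) choose (k-j)) else 0)
      = (\<Sum>j=0..N div 2. of_nat (N choose k) / of_nat (N-k+1) * of_nat ((k choose j) * ((N-k+1) choose (j+1))))"
    by (rule sum.cong[OF refl]) (rule termwise)
  also have "\<dots> = of_nat (N choose k) / of_nat (N-k+1)
                   * of_nat (\<Sum>j=0..N div 2. (k choose j) * ((N-k+1) choose (j+1)))"
    by (simp only: of_nat_sum sum_distrib_left)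
  also have "\<dots> = of_nat (Suc N choose k) / of_nat (Suc N) * of_nat (Suc N choose (k+1))"
    using assms by (simp only: sum_choose_mult_choose_Suc choose_divide_Suc_diff)
  finally show ?thesis
    unfolding narayana_def by (simp del: binomial_Suc_Suc of_nat_Suc)
qed

lemma motzkin_narayana_expansion:
  "motzkin (s+t) (s*t) N = (\<Sum>k=0..N. narayana (Suc N) k * s^k * t^(N-k))"
proof -
  define G where "G j i = of_nat (N choose (2*j)) * catalan j * of_nat ((N-2*j) choose i)
                            * s^(j+i) * t^(N-(j+i))" for j i
  have "motzkin (s+t) (s*t) N = (\<Sum>j=0..N div 2. \<Sum>i=0..N-2*j. G j i)"
    unfolding motzkin_def binomial_ring atLeast0AtMost[symmetric] sum_distrib_left sum_distrib_right
  proof (intro sum.cong refl)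
    fix j i assume "j \<in> {0..N div 2}" "i \<in> {0..N-2*j}"
    then have "N-(j+i) = (N-2*j-i) + j"
      by auto
    then show "of_nat (N choose (2*j)) * catalan j * (of_nat ((N-2*j) choose i) * s^i * t^(N-2*j-i))
               * (s*t)^j = G j i"
      unfolding G_def by (simp add: power_add power_mult_distrib algebra_simps)
  qed
  also have "\<dots> = (\<Sum>k=0..N. \<Sum>j=0..N div 2. if j \<le> k \<and> k - j \<le> N - 2*j then G j (k-j) else 0)"
    by (rule sum_half_triangle_regroup)
  also have "\<dots> = (\<Sum>k=0..N. (\<Sum>j=0..N div 2. if j \<le> k \<and> k - j \<le> N - 2*j
            then of_nat (N choose (2*j)) * catalan j * of_nat ((N-2*j) choose (k-j)) else 0)
            * s^k * t^(N-k))"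
    unfolding sum_distrib_right by (intro sum.cong refl) (auto simp: G_def)
  also have "\<dots> = (\<Sum>k=0..N. narayana (Suc N) k * s^k * t^(N-k))"
    by (intro sum.cong refl) (simp only: narayana_as_catalan_sum atLeastAtMost_iff)
  finally show ?thesis .
qed

theorem theorem1p1:
  fixes n :: nat and a b x :: complex
  assumes "n \<ge> 1"
  shows "(\<Sum>k=0..n-1. (1 / of_nat n) * of_nat (n choose k) * of_nat (n choose (k+1)) * x^(2*k) * b^(n-1-k))
       = (\<Sum>k=0..n-1. of_nat ((n-1) choose k) * motzkin a b k * x^k * (x^2 - a*x + b)^(n-1-k))"
proof -
  obtain N where n: "n = Suc N"
    using assms by (cases n) auto
  have "(\<Sum>k=0..N. of_nat (N choose k) * motzkin a b k * x^k * (x^2 - a*x + b)^(N-k))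
      = (\<Sum>k=0..N. of_nat (N choose k) * motzkin (a*x) (b*x^2) k * (x^2 - a*x + b)^(N-k))"
    by (simp add: motzkin_scale mult.assoc)
  also have "\<dots> = motzkin (a*x + (x^2 - a*x + b)) (b*x^2) N"
    by (rule motzkin_binomial_transform)
  also have "\<dots> = motzkin (x^2 + b) (x^2 * b) N"
    by (simp add: mult.commute)
  also have "\<dots> = (\<Sum>k=0..N. narayana (Suc N) k * (x^2)^k * b^(N-k))"
    by (rule motzkin_narayana_expansion)
  also have "\<dots> = (\<Sum>k=0..N. (1 / of_nat (Suc N)) * of_nat (Suc N choose k) * of_nat (Suc N choose (k+1))
                             * x^(2*k) * b^(N-k))"
    unfolding narayana_def power_mult by (simp del: binomial_Suc_Suc of_nat_Suc)
  finally show ?thesis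
    unfolding n by (simp del: binomial_Suc_Suc)
qed

end
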